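(* Let $U$ and $V$ be unitary matrices of sizes $N\times N$ and $M\times M$, with no zero entries, and let $F\in\mathbb C^{N\times N}$, $G\in\mathbb C^{M\times M}$ be arbitrary. Then (a) $\mathcal C_{U\otimes V}(F\otimes G)=\mathcal C_U(F)\otimes\mathcal C_V(G)$; (b) $\mathcal D_{U\otimes V}(F\otimes G)=\mathcal D_U(F)\otimes\mathcal D_V(G)$; (c) $\mathcal I_{U\otimes V}(F\otimes G)=\mathcal I_U(F)\otimes\mathcal I_V(G)$. That is, $\mathcal C_{U\otimes V}=\mathcal C_U\otimes\mathcal C_V$, $\mathcal D_{U\otimes V}=\mathcal D_U\otimes\mathcal D_V$, $\mathcal I_{U\otimes V}=\mathcal I_U\otimes\mathcal I_V$ (tensor products of operators taken with respect to the Kronecker product on arguments and results). The same holds for Kronecker products of more than two such unitary matrices.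
   Context: $\otimes$ is the Kronecker product, $\circ$ the entrywise product. For a unitary $W$ with no zero entries, $\mathcal C_W(F)=(F\circ W)W^*$, $\mathcal D_W(F)=W(\overline F\circ W)^*$ (both invertible linear operators on square matrices of the size of $W$), and $\mathcal I_W=\mathcal C_W^{-1}\mathcal D_W$. *)

theory Defs
  imports "Jordan_Normal_Form.Schur_Decomposition"
begin

definition kron :: "complex mat \<Rightarrow> complex mat \<Rightarrow> complex mat" where
  "kron A B = mat (dim_row A * dim_row B) (dim_col A * dim_col B)
     (\<lambda>(i,j). A $$ (i div dim_row B, j div dim_col B) * B $$ (i mod dim_row B, j mod dim_col B))"

definition kron_list :: "complex mat list \<Rightarrow> complex mat" where
  "kron_list As = foldr kron As (1\<^sub>m 1)"

definition hadamard :: "complex mat \<Rightarrow> complex mat \<Rightarrow> complex mat" where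
  "hadamard A B = mat (dim_row A) (dim_col A) (\<lambda>(i,j). A $$ (i,j) * B $$ (i,j))"

definition unitary_mat :: "nat \<Rightarrow> complex mat \<Rightarrow> bool" where
  "unitary_mat n W \<longleftrightarrow> W \<in> carrier_mat n n \<and> W * mat_adjoint W = 1\<^sub>m n \<and> mat_adjoint W * W = 1\<^sub>m n"

definition no_zero_entries :: "complex mat \<Rightarrow> bool" where
  "no_zero_entries W \<longleftrightarrow> (\<forall>i<dim_row W. \<forall>j<dim_col W. W $$ (i,j) \<noteq> 0)"

definition opC :: "complex mat \<Rightarrow> complex mat \<Rightarrow> complex mat" where
  "opC W F = hadamard F W * mat_adjoint W"

definition opD :: "complex mat \<Rightarrow> complex mat \<Rightarrow> complex mat" where
  "opD W F = W * mat_adjoint (hadamard (map_mat cnj F) W)"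

text \<open>I_W = C_W^{-1} D_W, with C_W^{-1} the inverse of C_W on square matrices of the size of W.\<close>
definition opI :: "complex mat \<Rightarrow> complex mat \<Rightarrow> complex mat" where
  "opI W F = (THE X. X \<in> carrier_mat (dim_row W) (dim_row W) \<and> opC W X = opD W F)"

end

theory Submission
  imports Defs
begin

text \<open>
  The operators \<open>C\<^sub>W\<close> and \<open>D\<^sub>W\<close> are composed of the entrywise product, the entrywise conjugate,
  the conjugate transpose and the matrix product, and each of these commutes with the Kronecker
  product (for the matrix product this is the mixed-product property). For \<open>I\<^sub>W\<close> one uses that
  \<open>C\<^sub>W\<close> is a bijection when \<open>W\<close> is unitary without zero entries, so \<open>I\<^sub>W(F)\<close> is the unique
  solution \<open>X\<close> of \<open>C\<^sub>W(X) = D\<^sub>W(F)\<close>; the Kronecker product of the two solutions solves the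
  equation for \<open>U \<otimes> V\<close>, as \<open>C\<close> and \<open>D\<close> are multiplicative and \<open>U \<otimes> V\<close> is again unitary without
  zero entries.
\<close>

lemma dim_row_mat_adjoint [simp]: "dim_row (mat_adjoint A) = dim_col A"
  and dim_col_mat_adjoint [simp]: "dim_col (mat_adjoint A) = dim_row A"
  unfolding mat_adjoint_def by auto

lemma index_mat_adjoint [simp]:
  "i < dim_col A \<Longrightarrow> j < dim_row A \<Longrightarrow> mat_adjoint A $$ (i, j) = cnj (A $$ (j, i))"
  unfolding mat_adjoint_def by (simp add: mat_of_rows_def)

lemma dim_row_kron [simp]: "dim_row (kron A B) = dim_row A * dim_row B"
  and dim_col_kron [simp]: "dim_col (kron A B) = dim_col A * dim_col B"
  unfolding kron_def by auto

lemma index_kron [simp]: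
  "i < dim_row A * dim_row B \<Longrightarrow> j < dim_col A * dim_col B \<Longrightarrow>
   kron A B $$ (i, j) = A $$ (i div dim_row B, j div dim_col B) * B $$ (i mod dim_row B, j mod dim_col B)"
  unfolding kron_def by auto

lemma dim_row_hadamard [simp]: "dim_row (hadamard A B) = dim_row A"
  and dim_col_hadamard [simp]: "dim_col (hadamard A B) = dim_col A"
  unfolding hadamard_def by auto

lemma index_hadamard [simp]:
  "i < dim_row A \<Longrightarrow> j < dim_col A \<Longrightarrow> hadamard A B $$ (i, j) = A $$ (i, j) * B $$ (i, j)"
  unfolding hadamard_def by auto

lemma div_mod_less_mult: "(i::nat) < n * m \<Longrightarrow> i div m < n \<and> i mod m < m"
  by (metis less_mult_imp_div_less mod_less_divisor mult.commute not_gr0 not_less_zero)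

lemma mult_add_less_mult: "(a::nat) < k \<Longrightarrow> b < l \<Longrightarrow> a * l + b < k * l"
  using mult_le_mono1[of "Suc a" k l] by simp

lemma sum_lessThan_mult: "(\<Sum>r<k * l. f r) = (\<Sum>a<k. \<Sum>b<l. f (a * l + b :: nat))"
proof -
  have "(\<Sum>r\<in>{a * l..<a * l + l}. f r) = (\<Sum>b<l. f (a * l + b))" for a
    using sum.shift_bounds_nat_ivl[of f 0 "a * l" l] by (simp add: lessThan_atLeast0 add.commute)
  then show ?thesis by (simp flip: sum.nat_group)
qed

lemma kron_mult_kron:
  assumes "A \<in> carrier_mat n k" "C \<in> carrier_mat k p" "B \<in> carrier_mat m l" "D \<in> carrier_mat l q"
  shows "kron A B * kron C D = kron (A * C) (B * D)"
proof (rule eq_matI)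
  fix i j assume "i < dim_row (kron (A * C) (B * D))" "j < dim_col (kron (A * C) (B * D))"
  then have i: "i < n * m" and j: "j < p * q" using assms by auto
  have entry: "kron A B $$ (i, a * l + b) * kron C D $$ (a * l + b, j) =
      (A $$ (i div m, a) * C $$ (a, j div q)) * (B $$ (i mod m, b) * D $$ (b, j mod q))"
    if "a < k" "b < l" for a b
    using that i j assms mult_add_less_mult[OF that] by (simp add: ac_simps)
  have "(kron A B * kron C D) $$ (i, j) = (\<Sum>r<k * l. kron A B $$ (i, r) * kron C D $$ (r, j))"
    using i j assms by (simp add: scalar_prod_def atLeast0LessThan)
  also have "\<dots> = (\<Sum>a<k. \<Sum>b<l. (A $$ (i div m, a) * C $$ (a, j div q)) * (B $$ (i mod m, b) * D $$ (b, j mod q)))"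
    by (simp add: sum_lessThan_mult entry)
  also have "\<dots> = (\<Sum>a<k. A $$ (i div m, a) * C $$ (a, j div q)) * (\<Sum>b<l. B $$ (i mod m, b) * D $$ (b, j mod q))"
    by (simp add: sum_product)
  also have "\<dots> = kron (A * C) (B * D) $$ (i, j)"
    using i j assms div_mod_less_mult[OF i] div_mod_less_mult[OF j]
    by (simp add: scalar_prod_def atLeast0LessThan)
  finally show "(kron A B * kron C D) $$ (i, j) = kron (A * C) (B * D) $$ (i, j)" .
qed (use assms in auto)

lemma mat_adjoint_kron: "mat_adjoint (kron A B) = kron (mat_adjoint A) (mat_adjoint B)"
  by (rule eq_matI) (auto simp: div_mod_less_mult)

lemma hadamard_kron:
  "dim_row F = dim_row U \<Longrightarrow> dim_col F = dim_col U \<Longrightarrow> dim_row G = dim_row V \<Longrightarrow> dim_col G = dim_col V \<Longrightarrow>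
   hadamard (kron F G) (kron U V) = kron (hadamard F U) (hadamard G V)"
  by (rule eq_matI) (auto simp: div_mod_less_mult)

lemma map_mat_cnj_kron: "map_mat cnj (kron F G) = kron (map_mat cnj F) (map_mat cnj G)"
  by (rule eq_matI) (auto simp: div_mod_less_mult)

lemma kron_one_one: "kron (1\<^sub>m n) (1\<^sub>m m) = 1\<^sub>m (n * m)"
proof (rule eq_matI)
  fix i j assume "i < dim_row (1\<^sub>m (n * m))" "j < dim_col (1\<^sub>m (n * m))"
  then have i: "i < n * m" and j: "j < n * m" by auto
  have "(i div m = j div m \<and> i mod m = j mod m) = (i = j)"
    by (metis div_mult_mod_eq)
  then show "kron (1\<^sub>m n) (1\<^sub>m m) $$ (i, j) = 1\<^sub>m (n * m) $$ (i, j)"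
    using i j div_mod_less_mult[OF i] div_mod_less_mult[OF j] by auto
qed auto

lemma kron_one_right: "kron A (1\<^sub>m 1) = A"
  by (rule eq_matI) auto

lemma unitary_mat_kron:
  assumes "unitary_mat n U" "unitary_mat m V"
  shows "unitary_mat (n * m) (kron U V)"
proof -
  have U: "U \<in> carrier_mat n n" "U * mat_adjoint U = 1\<^sub>m n" "mat_adjoint U * U = 1\<^sub>m n"
    and V: "V \<in> carrier_mat m m" "V * mat_adjoint V = 1\<^sub>m m" "mat_adjoint V * V = 1\<^sub>m m"
    using assms unfolding unitary_mat_def by auto
  have "kron U V * kron (mat_adjoint U) (mat_adjoint V) = kron (U * mat_adjoint U) (V * mat_adjoint V)"
    using U V by (intro kron_mult_kron) auto
  moreover have "kron (mat_adjoint U) (mat_adjoint V) * kron U V = kron (mat_adjoint U * U) (mat_adjoint V * V)"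
    using U V by (intro kron_mult_kron) auto
  ultimately show ?thesis
    using U V unfolding unitary_mat_def mat_adjoint_kron by (auto simp: kron_one_one)
qed

lemma unitary_mat_carrier: "unitary_mat n W \<Longrightarrow> W \<in> carrier_mat n n"
  unfolding unitary_mat_def by simp

lemma no_zero_entries_kron: "no_zero_entries U \<Longrightarrow> no_zero_entries V \<Longrightarrow> no_zero_entries (kron U V)"
  unfolding no_zero_entries_def by (auto simp: div_mod_less_mult)

lemma opC_kron:
  assumes "U \<in> carrier_mat n m" "V \<in> carrier_mat n' m'" "F \<in> carrier_mat n m" "G \<in> carrier_mat n' m'"
  shows "opC (kron U V) (kron F G) = kron (opC U F) (opC V G)"
proof -
  have "opC (kron U V) (kron F G) = kron (hadamard F U) (hadamard G V) * kron (mat_adjoint U) (mat_adjoint V)"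
    unfolding opC_def using assms by (simp add: hadamard_kron mat_adjoint_kron)
  also have "\<dots> = kron (opC U F) (opC V G)"
    unfolding opC_def using assms by (intro kron_mult_kron) auto
  finally show ?thesis .
qed

lemma opD_kron:
  assumes "U \<in> carrier_mat n m" "V \<in> carrier_mat n' m'" "F \<in> carrier_mat n m" "G \<in> carrier_mat n' m'"
  shows "opD (kron U V) (kron F G) = kron (opD U F) (opD V G)"
proof -
  have "opD (kron U V) (kron F G) =
      kron U V * kron (mat_adjoint (hadamard (map_mat cnj F) U)) (mat_adjoint (hadamard (map_mat cnj G) V))"
    unfolding opD_def using assms by (simp add: hadamard_kron mat_adjoint_kron map_mat_cnj_kron)
  also have "\<dots> = kron (opD U F) (opD V G)"
    unfolding opD_def using assms by (intro kron_mult_kron) auto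
  finally show ?thesis .
qed

lemma opD_carrier: "W \<in> carrier_mat n n \<Longrightarrow> F \<in> carrier_mat n n \<Longrightarrow> opD W F \<in> carrier_mat n n"
  unfolding opD_def by auto

lemma hadamard_cancel:
  assumes "no_zero_entries W" "X \<in> carrier_mat n m" "Y \<in> carrier_mat n m" "W \<in> carrier_mat n m"
    and "hadamard X W = hadamard Y W"
  shows "X = Y"
proof (rule eq_matI)
  fix i j assume "i < dim_row Y" "j < dim_col Y"
  then have ij: "i < n" "j < m" using assms by auto
  have "hadamard X W $$ (i, j) = hadamard Y W $$ (i, j)" using assms(5) by simp
  moreover have "W $$ (i, j) \<noteq> 0" using assms(1,4) ij unfolding no_zero_entries_def by auto
  ultimately show "X $$ (i, j) = Y $$ (i, j)" using ij assms(2-4) by simp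
qed (use assms in auto)

lemma opC_inj:
  assumes "unitary_mat n W" "no_zero_entries W" "X \<in> carrier_mat n n" "Y \<in> carrier_mat n n"
    and "opC W X = opC W Y"
  shows "X = Y"
proof -
  have W: "W \<in> carrier_mat n n" "mat_adjoint W * W = 1\<^sub>m n"
    using assms(1) unfolding unitary_mat_def by auto
  have recover: "opC W Z * W = hadamard Z W" if "Z \<in> carrier_mat n n" for Z
  proof -
    have "opC W Z * W = hadamard Z W * (mat_adjoint W * W)"
      unfolding opC_def using that W by (intro assoc_mult_mat) auto
    with W that show ?thesis by simp
  qed
  have "hadamard X W = hadamard Y W"
    using recover[OF assms(3)] recover[OF assms(4)] assms(5) by metis
  then show ?thesis by (rule hadamard_cancel[OF assms(2-4) W(1)])
qed

lemma opC_surj: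
  assumes "unitary_mat n W" "no_zero_entries W" "Z \<in> carrier_mat n n"
  shows "\<exists>X \<in> carrier_mat n n. opC W X = Z"
proof -
  have W: "W \<in> carrier_mat n n" "W * mat_adjoint W = 1\<^sub>m n"
    using assms(1) unfolding unitary_mat_def by auto
  define X where "X = mat n n (\<lambda>(i, j). (Z * W) $$ (i, j) / W $$ (i, j))"
  have "hadamard X W = Z * W"
  proof (rule eq_matI)
    fix i j assume "i < dim_row (Z * W)" "j < dim_col (Z * W)"
    then have ij: "i < n" "j < n" using assms W by auto
    have "W $$ (i, j) \<noteq> 0" using assms(2) W ij unfolding no_zero_entries_def by auto
    then show "hadamard X W $$ (i, j) = (Z * W) $$ (i, j)" using ij W unfolding X_def by simp
  qed (use assms W X_def in auto)
  then have "opC W X = Z * W * mat_adjoint W" unfolding opC_def by simp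
  also have "\<dots> = Z * (W * mat_adjoint W)"
    using assms(3) W by (intro assoc_mult_mat) auto
  also have "\<dots> = Z" using W assms(3) by simp
  finally have "opC W X = Z" .
  moreover have "X \<in> carrier_mat n n" unfolding X_def by simp
  ultimately show ?thesis by blast
qed

lemma opI_eqI:
  assumes "unitary_mat n W" "no_zero_entries W" "X \<in> carrier_mat n n" "opC W X = opD W F"
  shows "opI W F = X"
proof -
  have "dim_row W = n" using unitary_mat_carrier[OF assms(1)] by simp
  then show ?thesis
    unfolding opI_def using assms opC_inj[OF assms(1,2)] by (intro the_equality) auto
qed

lemma opI_carrier_opC:
  assumes "unitary_mat n W" "no_zero_entries W" "F \<in> carrier_mat n n"
  shows "opI W F \<in> carrier_mat n n \<and> opC W (opI W F) = opD W F"
proof -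
  have "opD W F \<in> carrier_mat n n"
    using opD_carrier[OF unitary_mat_carrier[OF assms(1)] assms(3)] .
  then obtain X where "X \<in> carrier_mat n n" "opC W X = opD W F"
    using opC_surj[OF assms(1,2)] by blast
  with opI_eqI[OF assms(1,2)] show ?thesis by simp
qed

lemma opI_kron:
  assumes "unitary_mat n U" "no_zero_entries U" "unitary_mat m V" "no_zero_entries V"
    and "F \<in> carrier_mat n n" "G \<in> carrier_mat m m"
  shows "opI (kron U V) (kron F G) = kron (opI U F) (opI V G)"
proof (rule opI_eqI[OF unitary_mat_kron[OF assms(1,3)] no_zero_entries_kron[OF assms(2,4)]])
  note U = unitary_mat_carrier[OF assms(1)] and V = unitary_mat_carrier[OF assms(3)]
  note IU = opI_carrier_opC[OF assms(1,2,5)] and IV = opI_carrier_opC[OF assms(3,4,6)]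
  show "kron (opI U F) (opI V G) \<in> carrier_mat (n * m) (n * m)" using IU IV by auto
  show "opC (kron U V) (kron (opI U F) (opI V G)) = opD (kron U V) (kron F G)"
    using IU IV opC_kron[OF U V, of "opI U F" "opI V G"] opD_kron[OF U V assms(5,6)] by simp
qed

lemma kron_list_singleton [simp]: "kron_list [A] = A"
  using kron_one_right[of A] by (simp add: kron_list_def)

lemma kron_list_Cons: "kron_list (A # As) = kron A (kron_list As)"
  by (simp add: kron_list_def)

lemma kron_list_closed:
  fixes ns :: "nat list"
  assumes closed: "\<And>n m U V F G. P n U F \<Longrightarrow> P m V G \<Longrightarrow> P (n * m) (kron U V) (kron F G)"
    and "ns \<noteq> []" "length Us = length ns" "length Fs = length ns"
    and "\<forall>k<length ns. P (ns!k) (Us!k) (Fs!k)"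
  shows "P (prod_list ns) (kron_list Us) (kron_list Fs)"
  using assms(2-)
proof (induction ns arbitrary: Us Fs rule: list_nonempty_induct)
  case (single n)
  then obtain U F where "Us = [U]" "Fs = [F]" by (auto simp: length_Suc_conv)
  with single show ?case by auto
next
  case (cons n ns)
  then obtain U Us' F Fs' where UF: "Us = U # Us'" "Fs = F # Fs'" by (auto simp: length_Suc_conv)
  have "P (prod_list ns) (kron_list Us') (kron_list Fs')"
    using cons by (intro cons.IH) (auto simp: UF)
  moreover have "P n U F" using cons.prems(3)[rule_format, of 0] by (simp add: UF)
  ultimately show ?case by (simp add: UF kron_list_Cons closed)
qed

lemma kron_list_map2:
  fixes ns :: "nat list"
  assumes closed: "\<And>n m U V F G. P n U F \<Longrightarrow> P m V G \<Longrightarrow> P (n * m) (kron U V) (kron F G)"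
    and mult: "\<And>n m U V F G. P n U F \<Longrightarrow> P m V G \<Longrightarrow> f (kron U V) (kron F G) = kron (f U F) (f V G)"
    and "ns \<noteq> []" "length Us = length ns" "length Fs = length ns"
    and "\<forall>k<length ns. P (ns!k) (Us!k) (Fs!k)"
  shows "f (kron_list Us) (kron_list Fs) = kron_list (map2 f Us Fs)"
  using assms(3-)
proof (induction ns arbitrary: Us Fs rule: list_nonempty_induct)
  case (single n)
  then obtain U F where "Us = [U]" "Fs = [F]" by (auto simp: length_Suc_conv)
  then show ?case by simp
next
  case (cons n ns)
  then obtain U Us' F Fs' where UF: "Us = U # Us'" "Fs = F # Fs'" by (auto simp: length_Suc_conv)
  have tail: "\<forall>k<length ns. P (ns!k) (Us'!k) (Fs'!k)"
    using cons.prems(3) by (auto simp: UF)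
  have "P (prod_list ns) (kron_list Us') (kron_list Fs')"
    using cons tail by (intro kron_list_closed[where P = P, OF closed]) (auto simp: UF)
  moreover have "P n U F" using cons.prems(3)[rule_format, of 0] by (simp add: UF)
  moreover have "f (kron_list Us') (kron_list Fs') = kron_list (map2 f Us' Fs')"
    using cons tail by (intro cons.IH) (auto simp: UF)
  ultimately show ?case by (simp add: UF kron_list_Cons mult)
qed

theorem lemma3p12:
  fixes U V F G :: "complex mat" and N M :: nat
  assumes "unitary_mat N U" and "no_zero_entries U"
      and "unitary_mat M V" and "no_zero_entries V"
      and "F \<in> carrier_mat N N" and "G \<in> carrier_mat M M"
  shows "opC (kron U V) (kron F G) = kron (opC U F) (opC V G)
       \<and> opD (kron U V) (kron F G) = kron (opD U F) (opD V G)
       \<and> opI (kron U V) (kron F G) = kron (opI U F) (opI V G)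
       \<and> (\<forall>Us Fs ns. length Us = length ns \<longrightarrow> length Fs = length ns \<longrightarrow> length ns \<ge> 2 \<longrightarrow>
           (\<forall>k<length ns. unitary_mat (ns!k) (Us!k) \<and> no_zero_entries (Us!k)
                          \<and> Fs!k \<in> carrier_mat (ns!k) (ns!k)) \<longrightarrow>
           opC (kron_list Us) (kron_list Fs) = kron_list (map2 opC Us Fs) \<and>
           opD (kron_list Us) (kron_list Fs) = kron_list (map2 opD Us Fs) \<and>
           opI (kron_list Us) (kron_list Fs) = kron_list (map2 opI Us Fs))"
proof (intro conjI allI impI)
  let ?P = "\<lambda>n W X. unitary_mat n W \<and> no_zero_entries W \<and> X \<in> carrier_mat n n"
  have closed: "?P (n * m) (kron U' V') (kron F' G')" if "?P n U' F'" "?P m V' G'" for n m U' V' F' G'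
    using that by (auto simp: unitary_mat_kron no_zero_entries_kron)
  have C: "opC (kron U' V') (kron F' G') = kron (opC U' F') (opC V' G')"
    if "?P n U' F'" "?P m V' G'" for n m U' V' F' G'
    using that unitary_mat_carrier[of n U'] unitary_mat_carrier[of m V'] opC_kron[of U' n n V' m m F' G'] by simp
  have D: "opD (kron U' V') (kron F' G') = kron (opD U' F') (opD V' G')"
    if "?P n U' F'" "?P m V' G'" for n m U' V' F' G'
    using that unitary_mat_carrier[of n U'] unitary_mat_carrier[of m V'] opD_kron[of U' n n V' m m F' G'] by simp
  have I: "opI (kron U' V') (kron F' G') = kron (opI U' F') (opI V' G')"
    if "?P n U' F'" "?P m V' G'" for n m U' V' F' G'
    using that opI_kron[of n U' m V' F' G'] by simp
  have UF: "?P N U F" and VG: "?P M V G" using assms by simp_all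
  show "opC (kron U V) (kron F G) = kron (opC U F) (opC V G)" by (rule C[OF UF VG])
  show "opD (kron U V) (kron F G) = kron (opD U F) (opD V G)" by (rule D[OF UF VG])
  show "opI (kron U V) (kron F G) = kron (opI U F) (opI V G)" by (rule I[OF UF VG])
  fix Us Fs :: "complex mat list" and ns :: "nat list"
  assume "length Us = length ns" "length Fs = length ns" "2 \<le> length ns"
    and "\<forall>k<length ns. unitary_mat (ns!k) (Us!k) \<and> no_zero_entries (Us!k) \<and> Fs!k \<in> carrier_mat (ns!k) (ns!k)"
  then have factors: "ns \<noteq> []" "length Us = length ns" "length Fs = length ns"
    "\<forall>k<length ns. ?P (ns!k) (Us!k) (Fs!k)" by auto
  show "opC (kron_list Us) (kron_list Fs) = kron_list (map2 opC Us Fs)"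
    by (rule kron_list_map2[where P = ?P and f = opC, OF closed C factors])
  show "opD (kron_list Us) (kron_list Fs) = kron_list (map2 opD Us Fs)"
    by (rule kron_list_map2[where P = ?P and f = opD, OF closed D factors])
  show "opI (kron_list Us) (kron_list Fs) = kron_list (map2 opI Us Fs)"
    by (rule kron_list_map2[where P = ?P and f = opI, OF closed I factors])
qed

end
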